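(* Let $G$ be a simple plane graph on $n\geq 2$ vertices that contains neither $K_4$ nor $C_6$ as a subgraph, and such that every maximal $2$-connected subgraph of $G$ has at most $5$ vertices. Then $e(G)\leq \frac{31}{15}n-\frac{7}{3}$.
   Context: $K_4$ is the complete graph on $4$ vertices, $C_6$ the cycle on $6$ vertices; $e(G)$ is the number of edges of $G$. A maximal $2$-connected subgraph (a block) is understood in the usual sense, where a single edge (bridge) counts as a block on $2$ vertices. *)

theory Defs
  imports "HOL-Analysis.Analysis"
begin

definition simple_graph :: "'a set \<Rightarrow> 'a set set \<Rightarrow> bool" where
  "simple_graph V E \<longleftrightarrow> finite V \<and>
     (\<forall>e\<in>E. \<exists>u v. u \<in> V \<and> v \<in> V \<and> u \<noteq> v \<and> e = {u, v})"

definition planar_graph :: "'a set \<Rightarrow> 'a set set \<Rightarrow> bool" where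
  "planar_graph V E \<longleftrightarrow>
    (\<exists>(pos :: 'a \<Rightarrow> real^2) (\<gamma> :: 'a set \<Rightarrow> real \<Rightarrow> real^2).
       inj_on pos V \<and>
       (\<forall>u v. {u, v} \<in> E \<longrightarrow>
           arc (\<gamma> {u, v}) \<and> pathstart (\<gamma> {u, v}) = pos u \<and> pathfinish (\<gamma> {u, v}) = pos v
         \<or> arc (\<gamma> {u, v}) \<and> pathstart (\<gamma> {u, v}) = pos v \<and> pathfinish (\<gamma> {u, v}) = pos u) \<and>
       (\<forall>e\<in>E. path_image (\<gamma> e) \<inter> pos ` V = pos ` e) \<and>
       (\<forall>e\<in>E. \<forall>e'\<in>E. e \<noteq> e' \<longrightarrow> path_image (\<gamma> e) \<inter> path_image (\<gamma> e') \<subseteq> pos ` (e \<inter> e')))"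

definition contains_subgraph :: "'b set \<Rightarrow> 'b set set \<Rightarrow> 'a set \<Rightarrow> 'a set set \<Rightarrow> bool" where
  "contains_subgraph VH EH V E \<longleftrightarrow>
     (\<exists>f. inj_on f VH \<and> f ` VH \<subseteq> V \<and> (\<forall>e\<in>EH. f ` e \<in> E))"

definition K4_verts :: "nat set" where "K4_verts = {0..<4}"
definition K4_edges :: "nat set set" where
  "K4_edges = {{i, j} | i j. i < 4 \<and> j < 4 \<and> i \<noteq> j}"

definition C6_verts :: "nat set" where "C6_verts = {0..<6}"
definition C6_edges :: "nat set set" where
  "C6_edges = {{i, (i + 1) mod 6} | i. i < 6}"

definition connected_on :: "'a set set \<Rightarrow> 'a set \<Rightarrow> bool" where
  "connected_on E S \<longleftrightarrow>
     (\<forall>u\<in>S. \<forall>v\<in>S. (\<lambda>x y. x \<in> S \<and> y \<in> S \<and> {x, y} \<in> E)\<^sup>*\<^sup>* u v)"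

text \<open>S spans a 2-connected subgraph in the block sense: at least 2 vertices, connected,
  and no cut vertex (so a single edge counts, on 2 vertices).\<close>
definition biconnected_on :: "'a set \<Rightarrow> 'a set set \<Rightarrow> 'a set \<Rightarrow> bool" where
  "biconnected_on V E S \<longleftrightarrow> S \<subseteq> V \<and> 2 \<le> card S \<and> connected_on E S \<and>
     (\<forall>x\<in>S. connected_on E (S - {x}))"

definition is_block :: "'a set \<Rightarrow> 'a set set \<Rightarrow> 'a set \<Rightarrow> bool" where
  "is_block V E B \<longleftrightarrow> biconnected_on V E B \<and>
     (\<forall>S. biconnected_on V E S \<and> B \<subseteq> S \<longrightarrow> S = B)"

end

theory Submission
  imports Defs
begin

text \<open>
  K4-freeness alone bounds the number of edges of a block on \<open>k \<le> 5\<close> vertices by \<open>2k - 2\<close>: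
  a K4-free graph on k vertices misses at least \<open>k - 3\<close> of the \<open>k choose 2\<close> pairs, since deleting
  one end of each missing pair leaves a clique. Edge counts add up over the block
  decomposition, where two pieces share at most one vertex, so \<open>e(G) \<le> 2n - 2\<close>. This is below
  \<open>31/15 n - 7/3\<close> as soon as \<open>n \<ge> 5\<close>, and for \<open>n \<le> 4\<close> the K4-free bound is enough.
\<close>

definition pairs :: "'a set \<Rightarrow> 'a set set" where
  "pairs U = {B. B \<subseteq> U \<and> card B = 2}"

definition edges_within :: "'a set set \<Rightarrow> 'a set \<Rightarrow> 'a set set" where
  "edges_within E U = {e \<in> E. e \<subseteq> U}"

lemma finite_pairs: "finite U \<Longrightarrow> finite (pairs U)"
  unfolding pairs_def by (rule finite_subset[of _ "Pow U"]) auto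

lemma card_pairs: "finite U \<Longrightarrow> card (pairs U) = card U choose 2"
  unfolding pairs_def by (simp add: n_subsets)

lemma simple_graph_finite: "simple_graph V E \<Longrightarrow> finite V"
  unfolding simple_graph_def by blast

lemma simple_graph_edgeE:
  assumes "simple_graph V E" "e \<in> E"
  obtains u v where "u \<in> V" "v \<in> V" "u \<noteq> v" "e = {u, v}"
  using assms unfolding simple_graph_def by blast

lemma edges_within_subset_pairs:
  "simple_graph V E \<Longrightarrow> edges_within E U \<subseteq> pairs U"
  unfolding edges_within_def pairs_def by (auto elim: simple_graph_edgeE)

lemma edges_within_vertices: "simple_graph V E \<Longrightarrow> edges_within E V = E"
  unfolding edges_within_def by (auto elim: simple_graph_edgeE)

lemma card_edges_within_le_choose:
  assumes "simple_graph V E" "finite U"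
  shows "card (edges_within E U) \<le> card U choose 2"
  using card_mono[OF finite_pairs edges_within_subset_pairs] card_pairs assms by metis

lemma contains_K4_if_clique:
  assumes "W \<subseteq> V" "card W = 4" "\<forall>u\<in>W. \<forall>v\<in>W. u \<noteq> v \<longrightarrow> {u, v} \<in> E"
  shows "contains_subgraph K4_verts K4_edges V E"
proof -
  have "finite W" using assms(2) by (metis card.infinite zero_neq_numeral)
  then obtain f where f: "bij_betw f {0..<4::nat} W"
    using ex_bij_betw_nat_finite assms(2) by metis
  show ?thesis unfolding contains_subgraph_def K4_verts_def K4_edges_def
  proof (intro exI[of _ f] conjI ballI)
    show "inj_on f {0..<4}" "f ` {0..<4} \<subseteq> V"
      using f assms(1) by (auto simp: bij_betw_def)
    fix e assume "e \<in> {{i, j} |i j. i < (4::nat) \<and> j < 4 \<and> i \<noteq> j}"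
    then obtain i j where ij: "e = {i, j}" "i < 4" "j < 4" "i \<noteq> j" by blast
    then have "f i \<in> W" "f j \<in> W" "f i \<noteq> f j"
      using f by (auto simp: bij_betw_def inj_on_def)
    then show "f ` e \<in> E" using assms(3) ij(1) by simp
  qed
qed

lemma contains_K4_if_few_non_edges:
  assumes "finite U" "U \<subseteq> V" "card (pairs U - E) + 4 \<le> card U"
  shows "contains_subgraph K4_verts K4_edges V E"
proof -
  define D where "D = pairs U - E"
  define pick where "pick B = (SOME x. x \<in> B)" for B :: "'a set"
  have pick_in: "pick B \<in> B" if "B \<in> D" for B
  proof -
    have "B \<noteq> {}" using that unfolding D_def pairs_def by auto
    then show ?thesis unfolding pick_def by (simp add: some_in_eq)
  qed
  have "finite D" unfolding D_def using finite_pairs[OF assms(1)] by blast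
  then have "card (pick ` D) \<le> card D" by (rule card_image_le)
  then have "4 \<le> card U - card (pick ` D)" using assms(3) unfolding D_def by linarith
  also have "\<dots> \<le> card (U - pick ` D)" using \<open>finite D\<close> by (intro diff_card_le_card_Diff) auto
  finally obtain W where W: "W \<subseteq> U - pick ` D" "card W = 4"
    by (meson obtain_subset_with_card_n)
  show ?thesis
  proof (rule contains_K4_if_clique)
    show "W \<subseteq> V" using W(1) assms(2) by blast
    show "card W = 4" by (fact W(2))
    show "\<forall>u\<in>W. \<forall>v\<in>W. u \<noteq> v \<longrightarrow> {u, v} \<in> E"
    proof (intro ballI impI)
      fix u v assume uv: "u \<in> W" "v \<in> W" "u \<noteq> v"
      show "{u, v} \<in> E"
      proof (rule ccontr)
        assume "{u, v} \<notin> E"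
        with uv W(1) have "{u, v} \<in> D" unfolding D_def pairs_def by auto
        then have "pick {u, v} \<in> {u, v}" "pick {u, v} \<in> pick ` D" using pick_in by auto
        with uv W(1) show False by auto
      qed
    qed
  qed
qed

lemma card_edges_within_K4_free:
  assumes "simple_graph V E" "\<not> contains_subgraph K4_verts K4_edges V E" "U \<subseteq> V"
  shows "card (edges_within E U) + card U \<le> (card U choose 2) + 3"
proof -
  have "finite U" using assms(1,3) simple_graph_finite finite_subset by blast
  have edges_le: "card (edges_within E U) \<le> card U choose 2"
    using card_edges_within_le_choose[OF assms(1) \<open>finite U\<close>] .
  show ?thesis
  proof (cases "card U \<le> 3")
    case True
    with edges_le show ?thesis by linarith
  next
    case False
    have "pairs U - E = pairs U - edges_within E U"
      using edges_within_subset_pairs[OF assms(1)] unfolding edges_within_def pairs_def by blast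
    then have "card (pairs U - E) = card (pairs U) - card (edges_within E U)"
      using card_Diff_subset edges_within_subset_pairs[OF assms(1)]
        finite_subset finite_pairs[OF \<open>finite U\<close>] by metis
    moreover have "card (pairs U - E) + 4 > card U"
      using contains_K4_if_few_non_edges[OF \<open>finite U\<close> assms(3), of E] assms(2) by linarith
    ultimately show ?thesis
      using card_pairs[OF \<open>finite U\<close>] edges_le False by linarith
  qed
qed

lemma card_edges_within_small_K4_free:
  assumes "simple_graph V E" "\<not> contains_subgraph K4_verts K4_edges V E" "U \<subseteq> V"
    and "U \<noteq> {}" "card U \<le> 5"
  shows "card (edges_within E U) \<le> 2 * (card U - 1)"
proof -
  have "finite U" using assms(1,3) simple_graph_finite finite_subset by blast
  then have "card U \<in> {1, 2, 3, 4, 5}" using assms(4,5) card_0_eq by fastforce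
  then show ?thesis
    using card_edges_within_K4_free[OF assms(1-3)] card_edges_within_le_choose[OF assms(1) \<open>finite U\<close>]
    by (auto simp: eval_nat_numeral)
qed

definition separation_order_le1 :: "'a set set \<Rightarrow> 'a set \<Rightarrow> 'a set \<Rightarrow> 'a set \<Rightarrow> bool" where
  "separation_order_le1 E U A C \<longleftrightarrow> A \<union> C = U \<and> card (A \<inter> C) \<le> 1 \<and> A - C \<noteq> {} \<and> C - A \<noteq> {} \<and>
     (\<forall>e\<in>edges_within E U. e \<subseteq> A \<or> e \<subseteq> C)"

lemma not_connected_onE:
  assumes "\<not> connected_on E S"
  obtains A C where "A \<union> C = S" "A \<inter> C = {}" "A \<noteq> {}" "C \<noteq> {}"
    "\<forall>a\<in>A. \<forall>c\<in>C. {a, c} \<notin> E"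
proof -
  let ?R = "\<lambda>x y. x \<in> S \<and> y \<in> S \<and> {x, y} \<in> E"
  obtain u v where uv: "u \<in> S" "v \<in> S" "\<not> ?R\<^sup>*\<^sup>* u v"
    using assms unfolding connected_on_def by blast
  define A where "A = {w\<in>S. ?R\<^sup>*\<^sup>* u w}"
  have "\<forall>a\<in>A. \<forall>c\<in>S - A. {a, c} \<notin> E"
    unfolding A_def by (auto intro: rtranclp.rtrancl_into_rtrancl)
  moreover have "u \<in> A" "v \<in> S - A" using uv unfolding A_def by auto
  ultimately show ?thesis using that[of A "S - A"] unfolding A_def by blast
qed

lemma separation_order_le1_if_no_edges_between:
  assumes "simple_graph V E" "A \<union> C = U" "card (A \<inter> C) \<le> 1" "A - C \<noteq> {}" "C - A \<noteq> {}"
    and no_edge: "\<forall>a\<in>A - C. \<forall>c\<in>C - A. {a, c} \<notin> E"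
  shows "separation_order_le1 E U A C"
  unfolding separation_order_le1_def
proof (intro conjI ballI assms(2-5))
  fix e assume "e \<in> edges_within E U"
  then have "e \<in> E" "e \<subseteq> U" unfolding edges_within_def by auto
  moreover obtain p q where "e = {p, q}"
    using simple_graph_edgeE[OF assms(1) \<open>e \<in> E\<close>] by metis
  moreover have "{a, c} \<notin> E \<and> {c, a} \<notin> E" if "a \<in> A - C" "c \<in> C - A" for a c
    using no_edge that by (simp add: insert_commute)
  ultimately show "e \<subseteq> A \<or> e \<subseteq> C"
    using assms(2) by blast
qed

lemma separation_order_le1_if_not_connected:
  assumes "simple_graph V E" "\<not> connected_on E U"
  shows "\<exists>A C. separation_order_le1 E U A C"
proof -
  obtain A C where "A \<union> C = U" "A \<inter> C = {}" "A \<noteq> {}" "C \<noteq> {}" "\<forall>a\<in>A. \<forall>c\<in>C. {a, c} \<notin> E"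
    using assms(2) by (rule not_connected_onE)
  then have "separation_order_le1 E U A C"
    by (intro separation_order_le1_if_no_edges_between[OF assms(1)]) (auto simp: Diff_triv)
  then show ?thesis by blast
qed

lemma separation_order_le1_if_cut_vertex:
  assumes "simple_graph V E" "x \<in> U" "\<not> connected_on E (U - {x})"
  shows "\<exists>A C. separation_order_le1 E U A C"
proof -
  obtain A C where AC: "A \<union> C = U - {x}" "A \<inter> C = {}" "A \<noteq> {}" "C \<noteq> {}"
    "\<forall>a\<in>A. \<forall>c\<in>C. {a, c} \<notin> E"
    using assms(3) by (rule not_connected_onE)
  have "insert x A \<inter> insert x C = {x}" "insert x A - insert x C = A" "insert x C - insert x A = C"
    using AC(1,2) by auto
  then have "separation_order_le1 E U (insert x A) (insert x C)"
    using AC assms(2) by (intro separation_order_le1_if_no_edges_between[OF assms(1)]) auto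
  then show ?thesis by blast
qed

lemma biconnected_if_no_separation_order_le1:
  assumes "simple_graph V E" "U \<subseteq> V" "2 \<le> card U" "\<nexists>A C. separation_order_le1 E U A C"
  shows "biconnected_on V E U"
proof -
  have "connected_on E U"
    using separation_order_le1_if_not_connected[OF assms(1)] assms(4) by blast
  moreover have "connected_on E (U - {x})" if "x \<in> U" for x
    using separation_order_le1_if_cut_vertex[OF assms(1) that] assms(4) by blast
  ultimately show ?thesis unfolding biconnected_on_def using assms(2,3) by blast
qed

lemma card_edges_within_separation_order_le1:
  assumes "separation_order_le1 E U A C" "finite (edges_within E U)"
  shows "card (edges_within E U) \<le> card (edges_within E A) + card (edges_within E C)"
proof -
  have "edges_within E U \<subseteq> edges_within E A \<union> edges_within E C"
    "edges_within E A \<union> edges_within E C \<subseteq> edges_within E U"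
    using assms(1) unfolding separation_order_le1_def edges_within_def by auto
  then have "card (edges_within E U) \<le> card (edges_within E A \<union> edges_within E C)"
    using assms(2) by (metis card_mono finite_subset)
  also have "\<dots> \<le> card (edges_within E A) + card (edges_within E C)"
    by (rule card_Un_le)
  finally show ?thesis .
qed

text \<open>Split along a disconnection or a cut vertex: the two parts share at most one vertex, so the
  bounds \<open>c (k - 1)\<close> of the parts add up to that of the whole.\<close>
lemma card_edges_within_le_if_biconnected_le:
  assumes "simple_graph V E"
    and biconnected_le: "\<And>S. biconnected_on V E S \<Longrightarrow> card (edges_within E S) \<le> c * (card S - 1)"
  shows "U \<subseteq> V \<Longrightarrow> U \<noteq> {} \<Longrightarrow> card (edges_within E U) \<le> c * (card U - 1)"
proof (induction "card U" arbitrary: U rule: less_induct)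
  case less
  have "finite U" using less.prems(1) assms(1) simple_graph_finite finite_subset by blast
  have edges_finite: "finite (edges_within E U)"
    using finite_subset[OF edges_within_subset_pairs[OF assms(1)] finite_pairs[OF \<open>finite U\<close>]] .
  have "card U \<noteq> 0" using less.prems(2) \<open>finite U\<close> by simp
  consider (separation) A C where "separation_order_le1 E U A C"
    | (single) "card U = 1"
    | (biconnected) "biconnected_on V E U"
  proof (cases "card U = 1")
    case False
    with \<open>card U \<noteq> 0\<close> have "2 \<le> card U" by linarith
    then show thesis
      using that biconnected_if_no_separation_order_le1[OF assms(1) less.prems(1)] by blast
  qed
  then show ?case
  proof cases
    case separation
    then have AC: "A \<union> C = U" "card (A \<inter> C) \<le> 1" "A - C \<noteq> {}" "C - A \<noteq> {}"
      unfolding separation_order_le1_def by auto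
    then have "A \<subset> U" "C \<subset> U" by auto
    then have "card A < card U" "card C < card U" using \<open>finite U\<close> by (auto intro: psubset_card_mono)
    moreover have "A \<subseteq> V" "C \<subseteq> V" "A \<noteq> {}" "C \<noteq> {}" using AC less.prems(1) by auto
    ultimately
    have "card (edges_within E A) \<le> c * (card A - 1)" "card (edges_within E C) \<le> c * (card C - 1)"
      using less.hyps by presburger+
    moreover have "card A + card C \<le> card U + 1" "card A \<ge> 1" "card C \<ge> 1"
      using card_Un_Int[of A C] AC \<open>finite U\<close> by (auto simp: Suc_le_eq card_gt_0_iff)
    then have "(card A - 1) + (card C - 1) \<le> card U - 1" by linarith
    then have "c * (card A - 1) + c * (card C - 1) \<le> c * (card U - 1)"
      by (metis add_mult_distrib2 mult_le_mono2)
    ultimately show ?thesis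
      using card_edges_within_separation_order_le1[OF separation edges_finite] by linarith
  next
    case single
    then show ?thesis
      using card_edges_within_le_choose[OF assms(1) \<open>finite U\<close>] by (simp add: binomial_eq_0)
  next
    case biconnected
    then show ?thesis by (rule biconnected_le)
  qed
qed

lemma biconnected_subset_block:
  assumes "finite V" "biconnected_on V E S"
  obtains B where "is_block V E B" "S \<subseteq> B"
proof -
  have "finite {T. biconnected_on V E T}"
    by (rule finite_subset[of _ "Pow V"]) (use assms(1) in \<open>auto simp: biconnected_on_def\<close>)
  then have "\<exists>B\<in>{T. biconnected_on V E T}. S \<subseteq> B \<and> (\<forall>T\<in>{T. biconnected_on V E T}. B \<subseteq> T \<longrightarrow> B = T)"
    by (rule finite_has_maximal2) (simp add: assms(2))
  then show ?thesis using that unfolding is_block_def by auto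
qed

lemma card_biconnected_le_if_blocks_le:
  assumes "finite V" "\<forall>B. is_block V E B \<longrightarrow> card B \<le> k" "biconnected_on V E S"
  shows "card S \<le> k"
proof -
  obtain B where "is_block V E B" "S \<subseteq> B"
    using biconnected_subset_block[OF assms(1,3)] by blast
  moreover have "finite B"
    using \<open>is_block V E B\<close> assms(1) finite_subset unfolding is_block_def biconnected_on_def by blast
  ultimately have "card S \<le> card B" by (simp add: card_mono)
  also have "\<dots> \<le> k" using assms(2) \<open>is_block V E B\<close> by blast
  finally show ?thesis .
qed

theorem corollary4:
  fixes V :: "'a set" and E :: "'a set set"
  assumes "simple_graph V E"
    and "planar_graph V E"
    and "card V \<ge> 2"
    and "\<not> contains_subgraph K4_verts K4_edges V E"
    and "\<not> contains_subgraph C6_verts C6_edges V E"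
    and "\<forall>B. is_block V E B \<longrightarrow> card B \<le> 5"
  shows "real (card E) \<le> 31 / 15 * real (card V) - 7 / 3"
proof -
  have "finite V" using assms(1) by (rule simple_graph_finite)
  have block_bound: "card (edges_within E S) \<le> 2 * (card S - 1)" if S: "biconnected_on V E S" for S
  proof (rule card_edges_within_small_K4_free[OF assms(1,4)])
    show "S \<subseteq> V" "S \<noteq> {}" using S unfolding biconnected_on_def by auto
    show "card S \<le> 5" using card_biconnected_le_if_blocks_le[OF \<open>finite V\<close> assms(6) S] .
  qed
  have "card (edges_within E V) \<le> 2 * (card V - 1)"
    by (rule card_edges_within_le_if_biconnected_le[OF assms(1) block_bound]) (use assms(3) in auto)
  then have linear: "card E \<le> 2 * (card V - 1)"
    by (simp add: edges_within_vertices[OF assms(1)])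
  have small: "card E + card V \<le> (card V choose 2) + 3" "card E \<le> card V choose 2"
    using card_edges_within_K4_free[OF assms(1,4) order_refl]
      card_edges_within_le_choose[OF assms(1) \<open>finite V\<close>]
    by (simp_all add: edges_within_vertices[OF assms(1)])
  consider "card V \<ge> 5" | "card V = 2 \<or> card V = 3 \<or> card V = 4" using assms(3) by linarith
  then show ?thesis
  proof cases
    case 1
    with linear show ?thesis by linarith
  next
    case 2
    with small have "card E \<le> 1 \<and> card V = 2 \<or> card E \<le> 3 \<and> card V = 3 \<or> card E \<le> 5 \<and> card V = 4"
      by (auto simp: numeral_eq_Suc)
    then show ?thesis by auto
  qed
qed

end
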